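(* Let $L_{\mathrm{Rect}}$ be the set of words of positive length over the alphabet $\{1,2,u,d\}$ defined in the context. Then: (1) $L_{\mathrm{Rect}}$ consists precisely of those nonempty words over $\{1,2,u,d\}$ whose last (rightmost) letter is $1$ and which contain neither $21$ nor $u1$ as a (contiguous) substring; (2) $L_{\mathrm{Rect}}$ is the language of the regular expression $(1^*(2|u)^*d)^*1^+$.
   Context: Permutations $\pi\in S_n$ are written in one-line form $[\pi_1\cdots\pi_n]$; $e_n$ denotes the identity of $S_n$ and $e_0$ the unique (empty) permutation of size $0$. A permutation is rectangular if it avoids the patterns $2413,2431,4213,4231$. For $\pi\in S_n$ and $1\le i,j\le n+1$, the insertion operator $\rho_{i,j}(\pi)\in S_{n+1}$ is obtained by increasing by $1$ every entry of $\pi$ that is $\ge i$ and then inserting the value $i$ so that it occupies position $j$. Define operators on rectangular permutations: $\psi_1=\rho_{1,1}$, with domain all rectangular permutations (including $e_0$); $\psi_2=\rho_{1,2}$, with domain the rectangular permutations $\pi$ of size $\ge 1$ with $\pi_1\ne 1$; $\psi_u(\pi)=\rho_{\pi_1,1}(\pi)$, with the same domain as $\psi_2$; $\psi_d(\pi)=\rho_{\pi_1+1,1}(\pi)$, with domain all rectangular permutations of size $\ge1$. A word $x_m x_{m-1}\cdots x_1$ over $\{1,2,u,d\}$ stands for the composition $\psi_{x_m}\circ\cdots\circ\psi_{x_1}$ (the rightmost letter is applied first). $L_{\mathrm{Rect}}$ is the set of words of length $m\ge1$ such that $\psi_{x_m}\circ\cdots\circ\psi_{x_1}(e_0)$ is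 defined, i.e. for each $j$, the permutation $\psi_{x_{j-1}}\circ\cdots\circ\psi_{x_1}(e_0)$ lies in the domain of $\psi_{x_j}$. *)

theory Defs
  imports Main "HOL-Library.Sublist"
begin

text \<open>Permutations are represented in one-line form as lists of naturals;
  a permutation of size n is a list that is a rearrangement of [1..n].\<close>

definition is_perm :: "nat list \<Rightarrow> bool" where
  "is_perm xs \<longleftrightarrow> distinct xs \<and> set xs = {1..length xs}"

definition contains_pattern :: "nat list \<Rightarrow> nat list \<Rightarrow> bool" where
  "contains_pattern p xs \<longleftrightarrow>
     (\<exists>is. length is = length p \<and> sorted_wrt (<) is \<and> (\<forall>k\<in>set is. k < length xs) \<and>
        (\<forall>a<length p. \<forall>b<length p. (xs ! (is ! a) < xs ! (is ! b)) \<longleftrightarrow> (p ! a < p ! b)))"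

definition avoids :: "nat list \<Rightarrow> nat list \<Rightarrow> bool" where
  "avoids xs p \<longleftrightarrow> \<not> contains_pattern p xs"

definition rectangular :: "nat list \<Rightarrow> bool" where
  "rectangular xs \<longleftrightarrow> is_perm xs \<and>
     avoids xs [2,4,1,3] \<and> avoids xs [2,4,3,1] \<and> avoids xs [4,2,1,3] \<and> avoids xs [4,2,3,1]"

text \<open>Insertion operator rho_{i,j}: increase entries \<ge> i by one, then insert
  value i so that it occupies (1-based) position j.\<close>
definition rho :: "nat \<Rightarrow> nat \<Rightarrow> nat list \<Rightarrow> nat list" where
  "rho i j xs = (let ys = map (\<lambda>v. if v \<ge> i then v + 1 else v) xs
                 in take (j - 1) ys @ [i] @ drop (j - 1) ys)"

datatype letter = One | Two | U | D

fun psi :: "letter \<Rightarrow> nat list \<Rightarrow> nat list option" where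
  "psi One xs = (if rectangular xs then Some (rho 1 1 xs) else None)"
| "psi Two xs = (if rectangular xs \<and> length xs \<ge> 1 \<and> hd xs \<noteq> 1 then Some (rho 1 2 xs) else None)"
| "psi U xs = (if rectangular xs \<and> length xs \<ge> 1 \<and> hd xs \<noteq> 1 then Some (rho (hd xs) 1 xs) else None)"
| "psi D xs = (if rectangular xs \<and> length xs \<ge> 1 then Some (rho (hd xs + 1) 1 xs) else None)"

text \<open>A word x_m x_{m-1} ... x_1 is the list [x_m, ..., x_1]; the rightmost
  letter (last of the list) is applied first, starting from e_0 = [].\<close>
fun eval_word :: "letter list \<Rightarrow> nat list option" where
  "eval_word [] = Some []"
| "eval_word (x # w) = (case eval_word w of None \<Rightarrow> None | Some p \<Rightarrow> psi x p)"

definition L_Rect :: "letter list set" where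
  "L_Rect = {w. w \<noteq> [] \<and> eval_word w \<noteq> None}"

datatype rexp = Zero | Eps | Atom letter | Alt rexp rexp | Times rexp rexp | Star rexp

definition conc :: "'a list set \<Rightarrow> 'a list set \<Rightarrow> 'a list set" where
  "conc A B = {u @ v | u v. u \<in> A \<and> v \<in> B}"

inductive_set star :: "'a list set \<Rightarrow> 'a list set" for A where
  star_nil: "[] \<in> star A"
| star_app: "u \<in> A \<Longrightarrow> v \<in> star A \<Longrightarrow> u @ v \<in> star A"

fun lang :: "rexp \<Rightarrow> letter list set" where
  "lang Zero = {}"
| "lang Eps = {[]}"
| "lang (Atom a) = {[a]}"
| "lang (Alt r s) = lang r \<union> lang s"
| "lang (Times r s) = conc (lang r) (lang s)"
| "lang (Star r) = star (lang r)"

definition Plus1 :: "rexp \<Rightarrow> rexp" where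
  "Plus1 r = Times r (Star r)"

definition rect_rexp :: rexp where
  "rect_rexp = Times (Star (Times (Star (Atom One)) (Times (Star (Alt (Atom Two) (Atom U))) (Atom D))))
                     (Plus1 (Atom One))"

end

theory Submission
  imports Defs
begin

text \<open>
  Every operator preserves rectangularity. An occurrence of a forbidden pattern in
  \<open>\<psi>\<^sub>x(\<pi>)\<close> that avoids the inserted entry is already one in \<open>\<pi>\<close>. For \<open>\<psi>\<^sub>1\<close> and \<open>\<psi>\<^sub>2\<close>
  the inserted entry is the minimum and sits in position 1 or 2, where no forbidden pattern
  has its minimum. For \<open>\<psi>\<^sub>u\<close> and \<open>\<psi>\<^sub>d\<close> the inserted entry and the old first entry are
  adjacent both in position and in value, so either can stand in for the other, and an
  occurrence using both is impossible because every forbidden pattern has a value strictly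
  between its first two entries.

  Hence a word is admissible exactly when every step meets the domain conditions. Since
  \<open>\<psi>\<^sub>x(\<pi>)\<close> starts with 1 iff \<open>x = 1\<close>, these say that the first letter applied is 1 and
  that 2 and u are never applied right after 1. Such words split into \<open>d\<close>-terminated blocks
  \<open>1\<^sup>*(2|u)\<^sup>*d\<close> followed by a nonempty run of 1s.
\<close>

definition shift :: "nat \<Rightarrow> nat \<Rightarrow> nat" where
  "shift i v = (if i \<le> v then v + 1 else v)"

lemma strict_mono_shift: "strict_mono (shift i)"
  by (rule strict_monoI) (auto simp: shift_def)

lemma shift_Suc: "v \<noteq> i \<Longrightarrow> shift (Suc i) v = shift i v"
  by (simp add: shift_def)

lemma rho_eq: "rho i j xs = take (j - 1) (map (shift i) xs) @ [i] @ drop (j - 1) (map (shift i) xs)"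
proof -
  have "(\<lambda>v. if v \<ge> i then v + 1 else v) = shift i"
    by (simp add: shift_def fun_eq_iff)
  then show ?thesis
    by (simp add: rho_def Let_def)
qed

lemma rho_first: "rho i (Suc 0) xs = i # map (shift i) xs"
  by (simp add: rho_eq)

lemma rho_second: "rho i 2 (x # xs) = shift i x # i # map (shift i) xs"
  by (simp add: rho_eq)

lemma insert_shift_atLeastAtMost:
  assumes "1 \<le> i" "i \<le> Suc n"
  shows "insert i (shift i ` {1..n}) = {1..Suc n}"
proof (intro equalityI subsetI)
  fix x assume "x \<in> insert i (shift i ` {1..n})"
  then show "x \<in> {1..Suc n}"
    using assms by (auto simp: shift_def)
next
  fix x assume x: "x \<in> {1..Suc n}"
  consider "x = i" | "x < i" | "i < x" by linarith
  then show "x \<in> insert i (shift i ` {1..n})"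
  proof cases
    case 2
    then have "x = shift i x" "x \<in> {1..n}"
      using x assms by (auto simp: shift_def)
    then show ?thesis by blast
  next
    case 3
    then have "x = shift i (x - 1)" "x - 1 \<in> {1..n}"
      using x assms by (auto simp: shift_def)
    then show ?thesis by blast
  qed simp
qed

lemma is_perm_insert:
  assumes "is_perm xs" "1 \<le> i" "i \<le> Suc (length xs)"
  shows "is_perm (i # map (shift i) xs)"
proof -
  have "i \<notin> shift i ` set xs"
    by (auto simp: shift_def)
  moreover have "distinct (map (shift i) xs)"
    using assms(1) strict_mono_shift
    by (simp add: is_perm_def distinct_map strict_mono_imp_inj_on inj_on_subset)
  ultimately show ?thesis
    using assms insert_shift_atLeastAtMost[of i "length xs"] by (simp add: is_perm_def)
qed

lemma is_perm_swap: "is_perm (a # b # xs) \<Longrightarrow> is_perm (b # a # xs)"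
  by (auto simp: is_perm_def insert_commute)

lemma is_perm_ConsD: "is_perm (a # xs) \<Longrightarrow> a \<notin> set xs \<and> 1 \<le> a \<and> a \<le> Suc (length xs)"
  by (auto simp: is_perm_def)

lemma is_perm_pos: "is_perm xs \<Longrightarrow> \<forall>v\<in>set xs. 0 < v"
  by (auto simp: is_perm_def)

definition occurrence :: "nat list \<Rightarrow> nat list \<Rightarrow> nat list \<Rightarrow> bool" where
  "occurrence p xs ix \<longleftrightarrow> length ix = length p \<and> sorted_wrt (<) ix \<and> (\<forall>k\<in>set ix. k < length xs) \<and>
     (\<forall>a<length p. \<forall>b<length p. (xs ! (ix ! a) < xs ! (ix ! b)) \<longleftrightarrow> (p ! a < p ! b))"

lemma contains_pattern_iff_occurrence: "contains_pattern p xs \<longleftrightarrow> (\<exists>ix. occurrence p xs ix)"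
  by (simp add: contains_pattern_def occurrence_def)

lemma contains_pattern_transfer:
  assumes "occurrence p ys ix" "strict_mono F"
    and "\<forall>k\<in>set ix. g k < length xs \<and> ys ! k = F (xs ! g k)"
    and "\<forall>k\<in>set ix. \<forall>l\<in>set ix. k < l \<longrightarrow> g k < g l"
  shows "contains_pattern p xs"
  unfolding contains_pattern_iff_occurrence
proof
  have sorted: "sorted_wrt (<) ix" and len: "length ix = length p"
    and order: "\<forall>a<length p. \<forall>b<length p. (ys ! (ix ! a) < ys ! (ix ! b)) \<longleftrightarrow> (p ! a < p ! b)"
    using assms(1) by (auto simp: occurrence_def)
  have "sorted_wrt (<) (map g ix)"
    using sorted assms(4) by (auto simp: sorted_wrt_map sorted_wrt_iff_nth_less)
  moreover have "(xs ! (map g ix ! a) < xs ! (map g ix ! b)) \<longleftrightarrow> (p ! a < p ! b)"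
    if "a < length p" "b < length p" for a b
  proof -
    have "ix ! a \<in> set ix" "ix ! b \<in> set ix"
      using that len by auto
    then show ?thesis
      using order that len assms(2,3) by (simp add: strict_mono_less)
  qed
  ultimately show "occurrence p xs (map g ix)"
    using len assms(3) by (auto simp: occurrence_def)
qed

lemma contains_pattern_if_head_unused:
  assumes "occurrence p (c # map F xs) ix" "0 \<notin> set ix" "strict_mono F"
  shows "contains_pattern p xs"
proof (rule contains_pattern_transfer[OF assms(1,3), where g = "\<lambda>k. k - 1"])
  show "\<forall>k\<in>set ix. k - 1 < length xs \<and> (c # map F xs) ! k = F (xs ! (k - 1))"
  proof
    fix k assume k: "k \<in> set ix"
    have "k \<noteq> 0"
      using assms(2) k by metis
    moreover have "k < Suc (length xs)"
      using assms(1) k by (auto simp: occurrence_def)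
    ultimately show "k - 1 < length xs \<and> (c # map F xs) ! k = F (xs ! (k - 1))"
      by (cases k) auto
  qed
  show "\<forall>k\<in>set ix. \<forall>l\<in>set ix. k < l \<longrightarrow> k - 1 < l - 1"
  proof (intro ballI impI)
    fix k l assume "k \<in> set ix" "l \<in> set ix" "k < l"
    moreover from this have "k \<noteq> 0"
      using assms(2) by metis
    ultimately show "k - 1 < l - 1"
      by auto
  qed
qed

lemma contains_pattern_if_second_unused:
  assumes "occurrence p (F a # c # map F' xs) ix" "1 \<notin> set ix" "strict_mono F"
    and "\<forall>v\<in>set xs. F' v = F v"
  shows "contains_pattern p (a # xs)"
proof (rule contains_pattern_transfer[OF assms(1,3), where g = "\<lambda>k. if k = 0 then 0 else k - 1"])
  show "\<forall>k\<in>set ix. (if k = 0 then 0 else k - 1) < length (a # xs) \<and>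
      (F a # c # map F' xs) ! k = F ((a # xs) ! (if k = 0 then 0 else k - 1))"
  proof
    fix k assume k: "k \<in> set ix"
    then have "k \<noteq> 1"
      using assms(2) by metis
    moreover have "k < Suc (Suc (length xs))"
      using assms(1) k by (auto simp: occurrence_def)
    ultimately show "(if k = 0 then 0 else k - 1) < length (a # xs) \<and>
      (F a # c # map F' xs) ! k = F ((a # xs) ! (if k = 0 then 0 else k - 1))"
      using assms(4) by (cases k; cases "k - 1") auto
  qed
  show "\<forall>k\<in>set ix. \<forall>l\<in>set ix. k < l \<longrightarrow> (if k = 0 then 0 else k - 1) < (if l = 0 then 0 else l - 1)"
  proof (intro ballI impI)
    fix k l assume "k \<in> set ix" "l \<in> set ix" "k < l"
    moreover from this have "k \<noteq> 1" "l \<noteq> 1"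
      using assms(2) by metis+
    ultimately show "(if k = 0 then 0 else k - 1) < (if l = 0 then 0 else l - 1)"
      by auto
  qed
qed

lemma sorted_wrt_less_nth_0_1:
  fixes ix :: "nat list"
  assumes "sorted_wrt (<) ix" "0 \<in> set ix" "1 \<in> set ix"
  shows "ix ! 0 = 0" "ix ! 1 = 1" "1 < length ix"
proof -
  obtain j0 j1 where j: "j0 < length ix" "ix ! j0 = 0" "j1 < length ix" "ix ! j1 = 1"
    using assms(2,3) by (metis in_set_conv_nth)
  moreover have "j0 \<le> 0" "j1 \<le> 1"
    using sorted_wrt_less_idx[OF assms(1)] j by metis+
  moreover have "j0 \<noteq> j1"
    using j by auto
  ultimately have "j0 = 0" "j1 = 1"
    by linarith+
  then show "ix ! 0 = 0" "ix ! 1 = 1" "1 < length ix"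
    using j by auto
qed

lemma occurrence_minimum:
  assumes "occurrence p ys ix" "k \<in> set ix" "\<forall>y\<in>set ys. ys ! k \<le> y"
    and "\<forall>j\<le>k. \<exists>b<length p. p ! b < p ! j"
  shows False
proof -
  have sorted: "sorted_wrt (<) ix" and len: "length ix = length p"
    using assms(1) by (auto simp: occurrence_def)
  obtain j where j: "j < length p" "ix ! j = k"
    using assms(2) len by (metis in_set_conv_nth)
  then have "j \<le> k"
    using sorted_wrt_less_idx[OF sorted] len by metis
  then obtain b where b: "b < length p" "p ! b < p ! j"
    using assms(4) by blast
  then have "ys ! (ix ! b) < ys ! k" and "ix ! b < length ys"
    using assms(1) j by (auto simp: occurrence_def)
  then show False
    using assms(3) by (meson leD nth_mem)
qed

lemma occurrence_adjacent_values:
  assumes "occurrence p ys ix" "a < length p" "b < length p" "c < length p"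
    and "ys ! (ix ! b) = Suc (ys ! (ix ! a))"
  shows "\<not> (p ! a < p ! c \<and> p ! c < p ! b) \<and> \<not> (p ! b < p ! c \<and> p ! c < p ! a)"
proof -
  have "\<forall>d<length p. \<forall>e<length p. (ys ! (ix ! d) < ys ! (ix ! e)) \<longleftrightarrow> (p ! d < p ! e)"
    using assms(1) by (simp add: occurrence_def)
  then show ?thesis
    using assms(2-5) by (metis less_Suc_eq not_less_eq less_asym)
qed

lemma contains_pattern_insert_min_first:
  assumes "contains_pattern p (1 # map (shift 1) xs)" "\<forall>v\<in>set xs. 0 < v"
    and "\<exists>b<length p. p ! b < p ! 0"
  shows "contains_pattern p xs"
proof -
  obtain ix where occ: "occurrence p (1 # map (shift 1) xs) ix"
    using assms(1) contains_pattern_iff_occurrence by blast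
  have "\<forall>y\<in>set (1 # map (shift 1) xs). (1 # map (shift 1) xs) ! 0 \<le> y"
    using assms(2) by (auto simp: shift_def)
  moreover have "\<forall>j\<le>0. \<exists>b<length p. p ! b < p ! j"
    using assms(3) by simp
  ultimately have "0 \<notin> set ix"
    using occurrence_minimum[OF occ] by blast
  then show ?thesis
    using contains_pattern_if_head_unused[OF occ _ strict_mono_shift] by blast
qed

lemma contains_pattern_insert_min_second:
  assumes "contains_pattern p (shift 1 x # 1 # map (shift 1) xs)" "\<forall>v\<in>set (x # xs). 0 < v"
    and "\<forall>j\<le>1. \<exists>b<length p. p ! b < p ! j"
  shows "contains_pattern p (x # xs)"
proof -
  obtain ix where occ: "occurrence p (shift 1 x # 1 # map (shift 1) xs) ix"
    using assms(1) contains_pattern_iff_occurrence by blast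
  have "\<forall>y\<in>set (shift 1 x # 1 # map (shift 1) xs). (shift 1 x # 1 # map (shift 1) xs) ! 1 \<le> y"
    using assms(2) by (auto simp: shift_def)
  then have "1 \<notin> set ix"
    using occurrence_minimum[OF occ _ _ assms(3)] by blast
  then show ?thesis
    using contains_pattern_if_second_unused[OF occ _ strict_mono_shift] by blast
qed

lemma contains_pattern_duplicate_head:
  assumes "contains_pattern p (G a # F a # map F xs)" "strict_mono F" "strict_mono G"
    and "\<forall>v\<in>set xs. G v = F v" "G a = Suc (F a) \<or> F a = Suc (G a)"
    and "\<exists>c<length p. p ! 0 < p ! c \<and> p ! c < p ! 1 \<or> p ! 1 < p ! c \<and> p ! c < p ! 0"
  shows "contains_pattern p (a # xs)"
proof -
  obtain ix where occ: "occurrence p (G a # F a # map F xs) ix"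
    using assms(1) contains_pattern_iff_occurrence by blast
  have sorted: "sorted_wrt (<) ix" and len: "length ix = length p"
    using occ by (auto simp: occurrence_def)
  consider "0 \<notin> set ix" | "1 \<notin> set ix" | "0 \<in> set ix" "1 \<in> set ix"
    by blast
  then show ?thesis
  proof cases
    case 1
    then show ?thesis
      using contains_pattern_if_head_unused[of p _ F "a # xs"] occ assms(2) by simp
  next
    case 2
    then show ?thesis
      using contains_pattern_if_second_unused[OF occ _ assms(3)] assms(4) by simp
  next
    case 3
    note ix = sorted_wrt_less_nth_0_1[OF sorted 3]
    obtain c where "c < length p" "p ! 0 < p ! c \<and> p ! c < p ! 1 \<or> p ! 1 < p ! c \<and> p ! c < p ! 0"
      using assms(6) by blast
    moreover have "0 < length p" "1 < length p"
      using ix(3) len by auto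
    moreover have "(G a # F a # map F xs) ! (ix ! 0) = G a" "(G a # F a # map F xs) ! (ix ! 1) = F a"
      using ix by simp_all
    ultimately show ?thesis
      using assms(5) occurrence_adjacent_values[OF occ, of 0 1 c] occurrence_adjacent_values[OF occ, of 1 0 c]
      by auto
  qed
qed

definition rect_patterns :: "nat list set" where
  "rect_patterns = {[2,4,1,3], [2,4,3,1], [4,2,1,3], [4,2,3,1]}"

lemma rectangular_iff: "rectangular xs \<longleftrightarrow> is_perm xs \<and> (\<forall>p\<in>rect_patterns. \<not> contains_pattern p xs)"
  by (auto simp: rectangular_def avoids_def rect_patterns_def)

lemma rect_patterns_first_two_not_min:
  "p \<in> rect_patterns \<Longrightarrow> \<forall>j\<le>1. \<exists>b<length p. p ! b < p ! j"
  by (auto simp: rect_patterns_def le_Suc_eq Ex_less_Suc eval_nat_numeral)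

lemma rect_patterns_value_between_first_two:
  "p \<in> rect_patterns \<Longrightarrow> \<exists>c<length p. p ! 0 < p ! c \<and> p ! c < p ! 1 \<or> p ! 1 < p ! c \<and> p ! c < p ! 0"
  by (auto simp: rect_patterns_def Ex_less_Suc eval_nat_numeral)

lemma rectangular_if_patterns_reflected:
  assumes "is_perm ys" "rectangular xs"
    and "\<And>p. p \<in> rect_patterns \<Longrightarrow> contains_pattern p ys \<Longrightarrow> contains_pattern p xs"
  shows "rectangular ys"
  using assms by (auto simp: rectangular_iff)

lemma rectangular_insert_min_first:
  assumes "rectangular xs"
  shows "rectangular (1 # map (shift 1) xs)"
proof -
  have perm: "is_perm xs"
    using assms by (simp add: rectangular_iff)
  show ?thesis
  proof (rule rectangular_if_patterns_reflected[OF is_perm_insert[OF perm] assms])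
    fix p assume p: "p \<in> rect_patterns" "contains_pattern p (1 # map (shift 1) xs)"
    show "contains_pattern p xs"
      using contains_pattern_insert_min_first[OF p(2) is_perm_pos[OF perm]]
        rect_patterns_first_two_not_min[OF p(1)] by blast
  qed simp_all
qed

lemma rectangular_insert_min_second:
  assumes "rectangular (x # xs)"
  shows "rectangular (shift 1 x # 1 # map (shift 1) xs)"
proof -
  have perm: "is_perm (x # xs)"
    using assms by (simp add: rectangular_iff)
  then have "is_perm (shift 1 x # 1 # map (shift 1) xs)"
    using is_perm_swap is_perm_insert[OF perm, of 1] by simp
  then show ?thesis
  proof (rule rectangular_if_patterns_reflected[OF _ assms(1)])
    fix p assume p: "p \<in> rect_patterns" "contains_pattern p (shift 1 x # 1 # map (shift 1) xs)"
    show "contains_pattern p (x # xs)"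
      using contains_pattern_insert_min_second[OF p(2) is_perm_pos[OF perm]
          rect_patterns_first_two_not_min[OF p(1)]] .
  qed
qed

lemma rectangular_insert_next_to_hd:
  assumes "rectangular (x # xs)" "i = x \<or> i = Suc x"
  shows "rectangular (i # map (shift i) (x # xs))"
proof -
  define j where "j = (if i = x then Suc x else x)"
  have perm: "is_perm (x # xs)"
    using assms by (simp add: rectangular_iff)
  have x: "x \<notin> set xs" "1 \<le> x" "x \<le> Suc (length xs)"
    using is_perm_ConsD[OF perm] by auto
  have eq: "i # map (shift i) (x # xs) = shift j x # shift i x # map (shift i) xs"
    using assms(2) by (auto simp: j_def shift_def)
  have adjacent: "shift j x = Suc (shift i x) \<or> shift i x = Suc (shift j x)"
    using assms(2) by (auto simp: j_def shift_def)
  have agree: "\<forall>v\<in>set xs. shift j v = shift i v"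
  proof
    fix v assume "v \<in> set xs"
    then have "v \<noteq> x"
      using x(1) by metis
    then show "shift j v = shift i v"
      using assms(2) shift_Suc[of v x] by (auto simp: j_def)
  qed
  have "is_perm (i # map (shift i) (x # xs))"
    using is_perm_insert[OF perm] x assms(2) by auto
  then show ?thesis
  proof (rule rectangular_if_patterns_reflected[OF _ assms(1)])
    fix p assume p: "p \<in> rect_patterns" "contains_pattern p (i # map (shift i) (x # xs))"
    show "contains_pattern p (x # xs)"
      using contains_pattern_duplicate_head[OF p(2)[unfolded eq] strict_mono_shift strict_mono_shift
          agree adjacent rect_patterns_value_between_first_two[OF p(1)]] .
  qed
qed

lemma rectangular_hd_pos: "rectangular (a # l) \<Longrightarrow> 0 < a"
  using is_perm_pos[of "a # l"] by (simp add: rectangular_iff)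

lemma psi_SomeD:
  assumes "psi x p = Some q"
  shows "rectangular q \<and> length q = Suc (length p) \<and> (hd q = 1 \<longleftrightarrow> x = One)"
proof (cases x)
  case One
  then show ?thesis
    using assms rectangular_insert_min_first by (auto simp: rho_first split: if_splits)
next
  case Two
  then obtain a l where "p = a # l" "a \<noteq> 1" "rectangular (a # l)"
    using assms by (cases p) (auto split: if_splits)
  then show ?thesis
    using Two assms rectangular_insert_min_second[of a l] rectangular_hd_pos[of a l]
    by (auto simp: rho_second shift_def)
next
  case U
  then obtain a l where "p = a # l" "a \<noteq> 1" "rectangular (a # l)"
    using assms by (cases p) (auto split: if_splits)
  then show ?thesis
    using U assms rectangular_insert_next_to_hd[of a l a] by (auto simp: rho_first)
next
  case D
  then obtain a l where "p = a # l" "rectangular (a # l)"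
    using assms by (cases p) (auto split: if_splits)
  then show ?thesis
    using D assms rectangular_insert_next_to_hd[of a l "Suc a"] rectangular_hd_pos[of a l]
    by (auto simp: rho_first)
qed

lemma psi_defined_iff:
  "rectangular p \<Longrightarrow> psi x p \<noteq> None \<longleftrightarrow> x = One \<or> p \<noteq> [] \<and> (x = D \<or> hd p \<noteq> 1)"
  by (cases x; cases p) auto

lemma eval_word_SomeD:
  "eval_word w = Some p \<Longrightarrow> rectangular p \<and> length p = length w \<and> (w \<noteq> [] \<longrightarrow> (hd p = 1 \<longleftrightarrow> hd w = One))"
proof (induction w arbitrary: p)
  case Nil
  then show ?case
    by (simp add: rectangular_def is_perm_def avoids_def contains_pattern_def)
next
  case (Cons x w)
  then obtain p' where "eval_word w = Some p'" "psi x p' = Some p"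
    by (auto split: option.splits)
  then show ?case
    using Cons.IH psi_SomeD by fastforce
qed

fun has_21_or_u1 :: "letter list \<Rightarrow> bool" where
  "has_21_or_u1 (x # y # ys) \<longleftrightarrow> (x = Two \<or> x = U) \<and> y = One \<or> has_21_or_u1 (y # ys)"
| "has_21_or_u1 _ \<longleftrightarrow> False"

lemma has_21_or_u1_iff_sublist: "has_21_or_u1 w \<longleftrightarrow> sublist [Two, One] w \<or> sublist [U, One] w"
  by (induction w rule: has_21_or_u1.induct) (auto simp: sublist_Cons_right)

lemma has_21_or_u1_Cons:
  "has_21_or_u1 (x # w) \<longleftrightarrow> w \<noteq> [] \<and> (x = Two \<or> x = U) \<and> hd w = One \<or> has_21_or_u1 w"
  by (cases w) auto

lemma has_21_or_u1_append:
  "has_21_or_u1 (v @ w) \<longleftrightarrow>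
     has_21_or_u1 v \<or> has_21_or_u1 w \<or> v \<noteq> [] \<and> w \<noteq> [] \<and> (last v = Two \<or> last v = U) \<and> hd w = One"
  by (induction v) (auto simp: has_21_or_u1_Cons)

lemma not_has_21_or_u1_if_One_notin: "One \<notin> set w \<Longrightarrow> \<not> has_21_or_u1 w"
  by (induction w rule: has_21_or_u1.induct) auto

lemma not_has_21_or_u1_if_only_One: "set w \<subseteq> {One} \<Longrightarrow> \<not> has_21_or_u1 w"
  by (induction w rule: has_21_or_u1.induct) auto

lemma eval_word_defined_iff: "eval_word w \<noteq> None \<longleftrightarrow> w = [] \<or> last w = One \<and> \<not> has_21_or_u1 w"
proof (induction w)
  case (Cons x w)
  show ?case
  proof (cases "eval_word w")
    case None
    then show ?thesis
      using Cons.IH by (auto simp: has_21_or_u1_Cons)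
  next
    case (Some p)
    note p = eval_word_SomeD[OF Some]
    show ?thesis
    proof (cases w)
      case Nil
      then show ?thesis
        using Some p psi_defined_iff[of p x] by auto
    next
      case (Cons y w')
      then have "p \<noteq> []" "hd p = 1 \<longleftrightarrow> y = One" "last w = One" "\<not> has_21_or_u1 w"
        using p Some Cons.IH by auto
      then show ?thesis
        using Some Cons p psi_defined_iff[of p x] by (cases x) auto
    qed
  qed
qed simp

lemma L_Rect_eq: "L_Rect = {w. w \<noteq> [] \<and> last w = One \<and> \<not> has_21_or_u1 w}"
  unfolding L_Rect_def using eval_word_defined_iff by blast

definition block_rexp :: rexp where
  "block_rexp = Times (Star (Atom One)) (Times (Star (Alt (Atom Two) (Atom U))) (Atom D))"

lemma rect_rexp_eq: "rect_rexp = Times (Star block_rexp) (Plus1 (Atom One))"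
  by (simp add: rect_rexp_def block_rexp_def)

lemma in_conc_iff: "w \<in> conc A B \<longleftrightarrow> (\<exists>u v. w = u @ v \<and> u \<in> A \<and> v \<in> B)"
  by (auto simp: conc_def)

lemma star_singletons_iff:
  assumes "\<forall>u\<in>A. length u = 1"
  shows "w \<in> star A \<longleftrightarrow> (\<forall>c\<in>set w. [c] \<in> A)"
proof
  show "w \<in> star A \<Longrightarrow> \<forall>c\<in>set w. [c] \<in> A"
    by (induction rule: star.induct) (use assms in \<open>auto simp: length_Suc_conv\<close>)
  show "\<forall>c\<in>set w. [c] \<in> A \<Longrightarrow> w \<in> star A"
    by (induction w) (auto intro: star_app[where u = "[_]", simplified] star_nil)
qed

lemma in_lang_block_rexp_iff:
  "u \<in> lang block_rexp \<longleftrightarrow> (\<exists>x y. u = x @ y @ [D] \<and> set x \<subseteq> {One} \<and> set y \<subseteq> {Two, U})"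
  by (auto simp: block_rexp_def in_conc_iff star_singletons_iff subset_iff) blast

lemma in_lang_Plus1_One_iff: "u \<in> lang (Plus1 (Atom One)) \<longleftrightarrow> u \<noteq> [] \<and> set u \<subseteq> {One}"
  by (cases u) (auto simp: Plus1_def in_conc_iff star_singletons_iff subset_iff)

lemma lang_block_rexpD: "u \<in> lang block_rexp \<Longrightarrow> u \<noteq> [] \<and> last u = D \<and> \<not> has_21_or_u1 u"
proof -
  assume "u \<in> lang block_rexp"
  then obtain x y where u: "u = x @ y @ [D]" "set x \<subseteq> {One}" "set y \<subseteq> {Two, U}"
    using in_lang_block_rexp_iff by blast
  have "One \<notin> set (y @ [D])"
    using u(3) by auto
  then have "\<not> has_21_or_u1 x" "\<not> has_21_or_u1 (y @ [D])"
    using u(2) not_has_21_or_u1_if_only_One not_has_21_or_u1_if_One_notin by auto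
  moreover have "x \<noteq> [] \<Longrightarrow> last x = One"
    using u(2) last_in_set by fastforce
  ultimately show ?thesis
    using u(1) has_21_or_u1_append[of x "y @ [D]"] by auto
qed

lemma append_D_in_lang_block_rexp:
  "D \<notin> set x \<Longrightarrow> \<not> has_21_or_u1 x \<Longrightarrow> x @ [D] \<in> lang block_rexp"
proof (induction x)
  case Nil
  show ?case
    using in_lang_block_rexp_iff[of "[D]"] by auto
next
  case (Cons c x)
  then have "x @ [D] \<in> lang block_rexp"
    by (auto simp: has_21_or_u1_Cons)
  then obtain x1 x2 where x: "x = x1 @ x2" "set x1 \<subseteq> {One}" "set x2 \<subseteq> {Two, U}"
    using in_lang_block_rexp_iff by auto
  consider "c = One" | "c = Two \<or> c = U"
    using Cons.prems(1) by (cases c) auto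
  then show ?case
    unfolding in_lang_block_rexp_iff
  proof cases
    case 1
    then show "\<exists>y z. (c # x) @ [D] = y @ z @ [D] \<and> set y \<subseteq> {One} \<and> set z \<subseteq> {Two, U}"
      using x by (intro exI[of _ "c # x1"] exI[of _ x2]) auto
  next
    case 2
    have "x1 = []"
    proof (rule ccontr)
      assume "x1 \<noteq> []"
      then have "hd x = One"
        using x(1,2) hd_in_set by fastforce
      then show False
        using Cons.prems(2) 2 \<open>x1 \<noteq> []\<close> x(1) by (auto simp: has_21_or_u1_Cons)
    qed
    then show "\<exists>y z. (c # x) @ [D] = y @ z @ [D] \<and> set y \<subseteq> {One} \<and> set z \<subseteq> {Two, U}"
      using x 2 by (intro exI[of _ "[]"] exI[of _ "c # x2"]) auto
  qed
qed

lemma star_lang_block_rexpD: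
  "v \<in> star (lang block_rexp) \<Longrightarrow> v = [] \<or> last v = D \<and> \<not> has_21_or_u1 v"
proof (induction rule: star.induct)
  case (star_app u v)
  then show ?case
    using lang_block_rexpD[OF star_app(1)] has_21_or_u1_append[of u v] by (auto simp: last_append)
qed simp

lemma star_lang_block_rexpI:
  "v \<noteq> [] \<Longrightarrow> last v = D \<Longrightarrow> \<not> has_21_or_u1 v \<Longrightarrow> v \<in> star (lang block_rexp)"
proof (induction "length v" arbitrary: v rule: less_induct)
  case less
  then have "D \<in> set v"
    by (metis last_in_set)
  then obtain x y where v: "v = x @ D # y" "D \<notin> set x"
    by (metis split_list_first)
  then have "\<not> has_21_or_u1 x" "\<not> has_21_or_u1 y"
    using less.prems(3) has_21_or_u1_append[of x "D # y"] has_21_or_u1_Cons[of D y] by auto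
  have "x @ [D] \<in> lang block_rexp"
    using append_D_in_lang_block_rexp v(2) \<open>\<not> has_21_or_u1 x\<close> by blast
  moreover have "y \<in> star (lang block_rexp)"
  proof (cases "y = []")
    case True
    then show ?thesis
      by (simp add: star_nil)
  next
    case False
    then show ?thesis
      using less.hyps[of y] less.prems(2) v(1) \<open>\<not> has_21_or_u1 y\<close> by simp
  qed
  ultimately have "(x @ [D]) @ y \<in> star (lang block_rexp)"
    by (rule star_app)
  then show ?case
    using v(1) by simp
qed

lemma split_trailing_Ones: "\<exists>v u. w = v @ u \<and> set u \<subseteq> {One} \<and> (v = [] \<or> last v \<noteq> One)"
proof (intro exI conjI)
  let ?P = "\<lambda>c. c = One"
  show "w = rev (dropWhile ?P (rev w)) @ rev (takeWhile ?P (rev w))"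
    by (simp flip: rev_append)
  show "set (rev (takeWhile ?P (rev w))) \<subseteq> {One}"
    by (auto dest: set_takeWhileD)
  show "rev (dropWhile ?P (rev w)) = [] \<or> last (rev (dropWhile ?P (rev w))) \<noteq> One"
    using hd_dropWhile[of ?P "rev w"] by (auto simp: last_rev)
qed

lemma in_lang_rect_rexpD:
  assumes "w \<in> lang rect_rexp"
  shows "w \<noteq> [] \<and> last w = One \<and> \<not> has_21_or_u1 w"
proof -
  obtain v u where w: "w = v @ u" "v \<in> star (lang block_rexp)" "u \<noteq> []" "set u \<subseteq> {One}"
    using assms by (auto simp: rect_rexp_eq in_conc_iff in_lang_Plus1_One_iff)
  have "last u = One"
    using w(3,4) last_in_set by fastforce
  moreover have "\<not> has_21_or_u1 u"
    using w(4) by (rule not_has_21_or_u1_if_only_One)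
  moreover have "v = [] \<or> last v = D \<and> \<not> has_21_or_u1 v"
    using w(2) by (rule star_lang_block_rexpD)
  ultimately show ?thesis
    using w(1,3) has_21_or_u1_append[of v u] by auto
qed

lemma in_lang_rect_rexpI:
  assumes "w \<noteq> []" "last w = One" "\<not> has_21_or_u1 w"
  shows "w \<in> lang rect_rexp"
proof -
  obtain v u where vu: "w = v @ u" "set u \<subseteq> {One}" "v = [] \<or> last v \<noteq> One"
    using split_trailing_Ones by blast
  then have "u \<noteq> []"
    using assms(1,2) by auto
  then have "hd u = One"
    using vu(2) hd_in_set by blast
  then have "\<not> has_21_or_u1 v" "v \<noteq> [] \<Longrightarrow> last v \<noteq> Two \<and> last v \<noteq> U"
    using vu(1) assms(3) \<open>u \<noteq> []\<close> has_21_or_u1_append[of v u] by auto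
  then have "v = [] \<or> last v = D \<and> \<not> has_21_or_u1 v"
    using vu(3) by (cases "last v") auto
  then have "v \<in> star (lang block_rexp)"
    using star_lang_block_rexpI[of v] by (auto intro: star_nil)
  then show ?thesis
    using vu(1,2) \<open>u \<noteq> []\<close> in_lang_Plus1_One_iff[of u]
    unfolding rect_rexp_eq lang.simps(5,6) in_conc_iff by blast
qed

lemma lang_rect_rexp: "lang rect_rexp = {w. w \<noteq> [] \<and> last w = One \<and> \<not> has_21_or_u1 w}"
  using in_lang_rect_rexpD in_lang_rect_rexpI by blast

theorem lemma3p3:
  shows "L_Rect = {w. w \<noteq> [] \<and> last w = One \<and> \<not> sublist [Two, One] w \<and> \<not> sublist [U, One] w}
         \<and> L_Rect = lang rect_rexp"
  using L_Rect_eq lang_rect_rexp has_21_or_u1_iff_sublist by simp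

end
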